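(* Let $k$ be an infinite Brauer field, let $d\ge 1$, assume that $\Sigma^*((d))$ holds, and fix $e\in\{0,\ldots,d\}\setminus\{1\}$. There is a constant $C(d)$ such that the following holds. Let $a_1,\ldots,a_n\in k$ be arbitrary and $b_1,\ldots,b_n\in k$ nonzero, and for $x,y\in k^n$ put $f(x,y)=a_1x_1^ey_1^{d-e}+\cdots+a_nx_n^ey_n^{d-e}$ and $g(x,y)=b_1x_1y_1^{d-1}+\cdots+b_nx_ny_n^{d-1}$. If $n>C(d)$, then there exist $x,y\in k^n$ with $f(x,y)=0$ and $g(x,y)\ne 0$.
   Context: A field $k$ is a Brauer field if for every $d\ge 1$ there is $N_k(d)$ such that every equation $a_1x_1^d+\cdots+a_nx_n^d=0$ with $n>N_k(d)$, $a_i\in k$, has a non-trivial solution in $k^n$. Multi-degrees are tuples $(e_1\ge\cdots\ge e_s\ge 1)$ of integers compared lexicographically. Strength: for a homogeneous $f$ of degree $d>0$, $\operatorname{str}(f)$ is the minimal $s$ with $f=\sum_{t=1}^s g_th_t$, $g_t,h_t$ homogeneous over $k$ of degrees $<d$; the strength of a tuple is the minimal strength of a nontrivial $k$-linear combination of its members of equal degree. $\Sigma(\underline{e})$ is the statement: there is a constant $C$ such that for every finite-dimensional $k$-vector space $U$ and every tuple $\underline{h}$ of homogeneous polynomials on $U$ of multi-degree $\underline{e}$ with $\operatorname{str}(\underline{h})>C$, the $k$-points of the common zero locus $Z(\underline{h})$ are Zariski dense. $\Sigma^*((d))$ is the statement that $\Sigma(\underline{e})$ holds for every multi-degree $\underline{e}$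 with first entry $<d$. *)

theory Defs
  imports Main "HOL-Library.Poly_Mapping"
begin

text \<open>Polynomials in the variables x_0, x_1, ... with coefficients in 'a:
  a finitely supported map from monomials (exponent vectors) to coefficients.\<close>
type_synonym 'a mpoly = "(nat \<Rightarrow>\<^sub>0 nat) \<Rightarrow>\<^sub>0 'a"

definition mdeg :: "(nat \<Rightarrow>\<^sub>0 nat) \<Rightarrow> nat" where
  "mdeg m = (\<Sum>i\<in>Poly_Mapping.keys m. Poly_Mapping.lookup m i)"

definition in_vars :: "nat \<Rightarrow> 'a::zero mpoly \<Rightarrow> bool" where
  "in_vars n p \<longleftrightarrow> (\<forall>m\<in>Poly_Mapping.keys p. \<forall>i\<in>Poly_Mapping.keys m. i < n)"

definition homog :: "nat \<Rightarrow> 'a::zero mpoly \<Rightarrow> bool" where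
  "homog d p \<longleftrightarrow> (\<forall>m\<in>Poly_Mapping.keys p. mdeg m = d)"

definition peval :: "'a::comm_ring_1 mpoly \<Rightarrow> (nat \<Rightarrow> 'a) \<Rightarrow> 'a" where
  "peval p x = (\<Sum>m\<in>Poly_Mapping.keys p. Poly_Mapping.lookup p m * (\<Prod>i\<in>Poly_Mapping.keys m. x i ^ Poly_Mapping.lookup m i))"

definition const_poly :: "'a::zero \<Rightarrow> 'a mpoly" where
  "const_poly c = Poly_Mapping.single 0 c"

definition str_le :: "nat \<Rightarrow> nat \<Rightarrow> 'a::comm_ring_1 mpoly \<Rightarrow> nat \<Rightarrow> bool" where
  "str_le n d f s \<longleftrightarrow>
    (\<exists>g h :: nat \<Rightarrow> 'a mpoly. \<exists>dg dh :: nat \<Rightarrow> nat.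
       (\<forall>t<s. in_vars n (g t) \<and> in_vars n (h t) \<and> homog (dg t) (g t) \<and> homog (dh t) (h t)
              \<and> dg t < d \<and> dh t < d \<and> dg t + dh t = d)
       \<and> f = (\<Sum>t<s. g t * h t))"

definition multideg :: "nat list \<Rightarrow> bool" where
  "multideg e \<longleftrightarrow> e \<noteq> [] \<and> sorted_wrt (\<ge>) e \<and> (\<forall>x\<in>set e. x \<ge> 1)"

definition tuple_str_gt :: "nat \<Rightarrow> nat list \<Rightarrow> (nat \<Rightarrow> 'a::comm_ring_1 mpoly) \<Rightarrow> nat \<Rightarrow> bool" where
  "tuple_str_gt n e hs C \<longleftrightarrow>
    (\<forall>D. \<forall>c :: nat \<Rightarrow> 'a.
       (\<exists>i<length e. e ! i = D \<and> c i \<noteq> 0) \<longrightarrow>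
       \<not> str_le n D (\<Sum>i\<in>{i. i < length e \<and> e ! i = D}. const_poly (c i) * hs i) C)"

text \<open>The k-points of Z(hs) are Zariski dense in Z(hs): every polynomial over k
  vanishing on all k-points of Z(hs) lies in the radical of the ideal (hs)
  (equivalently, by the Nullstellensatz, vanishes on Z(hs) over the algebraic closure).\<close>
definition kpoints_dense :: "nat \<Rightarrow> nat \<Rightarrow> (nat \<Rightarrow> 'a::comm_ring_1 mpoly) \<Rightarrow> bool" where
  "kpoints_dense n s hs \<longleftrightarrow>
    (\<forall>p. in_vars n p \<longrightarrow>
       (\<forall>x :: nat \<Rightarrow> 'a. (\<forall>i<s. peval (hs i) x = 0) \<longrightarrow> peval p x = 0) \<longrightarrow>
       (\<exists>r::nat. \<exists>q :: nat \<Rightarrow> 'a mpoly. p ^ r = (\<Sum>i<s. q i * hs i)))"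

definition Sigma :: "'a::field itself \<Rightarrow> nat list \<Rightarrow> bool" where
  "Sigma TYPE('a) e \<longleftrightarrow>
    (\<exists>C::nat. \<forall>n. \<forall>hs :: nat \<Rightarrow> 'a mpoly.
       (\<forall>i<length e. in_vars n (hs i) \<and> homog (e ! i) (hs i)) \<longrightarrow>
       tuple_str_gt n e hs C \<longrightarrow> kpoints_dense n (length e) hs)"

definition Sigma_star :: "'a::field itself \<Rightarrow> nat \<Rightarrow> bool" where
  "Sigma_star TYPE('a) d \<longleftrightarrow> (\<forall>e. multideg e \<longrightarrow> hd e < d \<longrightarrow> Sigma TYPE('a) e)"

definition brauer_field :: "'a::field itself \<Rightarrow> bool" where
  "brauer_field TYPE('a) \<longleftrightarrow>
    (\<forall>d::nat. d \<ge> 1 \<longrightarrow> (\<exists>N::nat. \<forall>n>N. \<forall>a :: nat \<Rightarrow> 'a.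
       \<exists>x :: nat \<Rightarrow> 'a. (\<exists>i<n. x i \<noteq> 0) \<and> (\<Sum>i<n. a i * x i ^ d) = 0))"

end

theory Submission
  imports Defs "HOL-Computational_Algebra.Polynomial"
begin

text \<open>For \<open>e = 0\<close>, f does not involve x: take a nontrivial zero y of the diagonal form
  \<open>\<Sum> a\<^sub>i y\<^sub>i\<^sup>d\<close> and let x be the unit vector at a coordinate j with \<open>y\<^sub>j \<noteq> 0\<close>.
  For \<open>e \<ge> 2\<close>, take a nontrivial zero x of \<open>\<Sum> a\<^sub>i x\<^sub>i\<^sup>e\<close> and \<open>y = 1\<close>; if g vanishes there,
  use the torus action: scaling \<open>(x\<^sub>i, y\<^sub>i)\<close> by \<open>(v\<^bsup>d-e\<^esup>, 1)\<close> for \<open>i \<noteq> j\<close> and by \<open>(1, v\<^sup>e)\<close> for \<open>i = j\<close>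
  multiplies every term of f by \<open>v\<^bsup>e(d-e)\<^esup>\<close>, while the terms of g acquire the different
  factors \<open>v\<^bsup>d-e\<^esup>\<close> and \<open>v\<^bsup>e(d-1)\<^esup>\<close>, whose ratio is \<open>v\<^bsup>d(e-1)\<^esup>\<close>. As k is infinite, v can be
  chosen with \<open>v\<^bsup>d(e-1)\<^esup> \<noteq> 1\<close>, which makes g nonzero.\<close>

lemma infinite_field_obtains_non_root_of_unity:
  assumes "infinite (UNIV :: 'a set)" and "m \<ge> 1"
  obtains v :: "'a::field" where "v \<noteq> 0" and "v ^ m \<noteq> 1"
proof -
  let ?p = "monom (1::'a) m - 1"
  have "poly ?p 0 = -1"
    using assms(2) by (simp add: poly_monom)
  then have "?p \<noteq> 0"
    by auto
  then have "finite (insert 0 {x. poly ?p x = 0})"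
    using poly_roots_finite by blast
  then obtain v where "v \<notin> insert 0 {x. poly ?p x = 0}"
    using assms(1) ex_new_if_finite by blast
  then show thesis
    using that by (auto simp: poly_monom)
qed

lemma sum_lessThan_update:
  fixes p q :: "nat \<Rightarrow> 'a::ab_group_add"
  assumes "j < n"
  shows "(\<Sum>i<n. if i = j then p i else q i) = (\<Sum>i<n. q i) + (p j - q j)"
proof -
  have "(\<Sum>i<n. if i = j then p i else q i) = (\<Sum>i<n. q i + (if i = j then p j - q j else 0))"
    by (rule sum.cong) auto
  then show ?thesis
    using assms by (simp add: sum.distrib)
qed

lemma brauer_fieldE:
  assumes "brauer_field TYPE('a::field)" and "d \<ge> 1"
  obtains N where "\<And>n (a :: nat \<Rightarrow> 'a). n > N \<Longrightarrow>
    \<exists>x. (\<exists>i<n. x i \<noteq> 0) \<and> (\<Sum>i<n. a i * x i ^ d) = 0"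
  using assms unfolding brauer_field_def by blast

definition diag_biform :: "nat \<Rightarrow> nat \<Rightarrow> nat \<Rightarrow> (nat \<Rightarrow> 'a::comm_ring_1) \<Rightarrow> (nat \<Rightarrow> 'a) \<Rightarrow> (nat \<Rightarrow> 'a) \<Rightarrow> 'a"
  where "diag_biform n e d a x y = (\<Sum>i<n. a i * x i ^ e * y i ^ (d - e))"

lemma diag_biform_zero_nonzero_deg0:
  fixes a b y :: "nat \<Rightarrow> 'a::idom"
  assumes "(\<Sum>i<n. a i * y i ^ d) = 0" and "j < n" and "y j \<noteq> 0" and "b j \<noteq> 0"
  shows "\<exists>x y. diag_biform n 0 d a x y = 0 \<and> diag_biform n 1 d b x y \<noteq> 0"
proof (intro exI conjI)
  let ?x = "\<lambda>i. if i = j then 1 else 0"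
  show "diag_biform n 0 d a ?x y = 0"
    using assms(1) by (simp add: diag_biform_def)
  have "diag_biform n 1 d b ?x y = (\<Sum>i<n. if i = j then b j * y j ^ (d - 1) else 0)"
    unfolding diag_biform_def by (rule sum.cong) auto
  also have "\<dots> = b j * y j ^ (d - 1)"
    using assms(2) by simp
  finally show "diag_biform n 1 d b ?x y \<noteq> 0"
    using assms(3,4) by simp
qed

lemma diag_biform_zero_nonzero_by_rescaling:
  fixes a b x :: "nat \<Rightarrow> 'a::idom" and v :: 'a
  assumes f0: "(\<Sum>i<n. a i * x i ^ e) = 0" and j: "j < n" "x j \<noteq> 0" "b j \<noteq> 0"
    and v: "v \<noteq> 0" "v ^ (d * (e - 1)) \<noteq> 1" and e: "1 \<le> e" "e \<le> d"
  shows "\<exists>x y. diag_biform n e d a x y = 0 \<and> diag_biform n 1 d b x y \<noteq> 0"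
proof (cases "(\<Sum>i<n. b i * x i) = 0")
  case False
  then show ?thesis
    using f0 by (intro exI[of _ x] exI[of _ "\<lambda>_. 1"]) (simp add: diag_biform_def)
next
  case g0: True
  define xv where "xv i = (if i = j then x i else v ^ (d - e) * x i)" for i
  define yv where "yv i = (if i = j then v ^ e else 1)" for i
  have "diag_biform n e d a xv yv = (\<Sum>i<n. v ^ (e * (d - e)) * (a i * x i ^ e))"
    unfolding diag_biform_def xv_def yv_def
    by (rule sum.cong) (auto simp: power_mult_distrib power_mult[symmetric] ac_simps)
  then have f: "diag_biform n e d a xv yv = 0"
    using f0 by (simp add: sum_distrib_left[symmetric])
  have "diag_biform n 1 d b xv yv =
      (\<Sum>i<n. if i = j then v ^ (e * (d - 1)) * (b i * x i) else v ^ (d - e) * (b i * x i))"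
    unfolding diag_biform_def xv_def yv_def
    by (rule sum.cong) (auto simp: power_mult[symmetric] ac_simps)
  also have "\<dots> = (v ^ (e * (d - 1)) - v ^ (d - e)) * (b j * x j)"
    using j g0 by (simp add: sum_lessThan_update sum_distrib_left[symmetric] left_diff_distrib)
  also have "v ^ (e * (d - 1)) = v ^ (d - e) * v ^ (d * (e - 1))"
  proof -
    have "e * (d - 1) = (d - e) + d * (e - 1)"
      using e by (simp add: algebra_simps diff_mult_distrib diff_mult_distrib2)
    then show ?thesis
      by (simp add: power_add)
  qed
  finally have "diag_biform n 1 d b xv yv = v ^ (d - e) * (v ^ (d * (e - 1)) - 1) * (b j * x j)"
    by (simp add: algebra_simps)
  then have "diag_biform n 1 d b xv yv \<noteq> 0"
    using j v by simp
  with f show ?thesis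
    by blast
qed

theorem lemma6p2:
  fixes d e :: nat
  assumes "infinite (UNIV :: 'a::field set)"
    and "brauer_field TYPE('a)"
    and "d \<ge> 1"
    and "Sigma_star TYPE('a) d"
    and "e \<le> d" and "e \<noteq> 1"
  shows "\<exists>C::nat. \<forall>n. \<forall>a b :: nat \<Rightarrow> 'a. n > C \<longrightarrow> (\<forall>i<n. b i \<noteq> 0) \<longrightarrow>
           (\<exists>x y :: nat \<Rightarrow> 'a. (\<Sum>i<n. a i * x i ^ e * y i ^ (d - e)) = 0 \<and>
                              (\<Sum>i<n. b i * x i * y i ^ (d - 1)) \<noteq> 0)"
proof -
  define e' where "e' = (if e = 0 then d else e)"
  have "e' \<ge> 1"
    using assms(3) by (simp add: e'_def)
  then obtain N where N: "\<And>n (a :: nat \<Rightarrow> 'a). n > N \<Longrightarrow>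
      \<exists>x. (\<exists>i<n. x i \<noteq> 0) \<and> (\<Sum>i<n. a i * x i ^ e') = 0"
    using brauer_fieldE[OF assms(2)] by blast
  have "d * (e - 1) \<ge> 1" if "e \<noteq> 0"
    using that assms(3,6) by simp
  then obtain v :: 'a where v: "e \<noteq> 0 \<Longrightarrow> v \<noteq> 0 \<and> v ^ (d * (e - 1)) \<noteq> 1"
    using infinite_field_obtains_non_root_of_unity[OF assms(1)] by metis
  have "\<exists>x y. diag_biform n e d a x y = 0 \<and> diag_biform n 1 d b x y \<noteq> 0"
    if "n > N" and b: "\<forall>i<n. b i \<noteq> 0" for n and a b :: "nat \<Rightarrow> 'a"
  proof -
    obtain z j where z: "j < n" "z j \<noteq> 0" "(\<Sum>i<n. a i * z i ^ e') = 0"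
      using N[OF \<open>n > N\<close>, of a] by blast
    show ?thesis
    proof (cases "e = 0")
      case True
      then show ?thesis
        using diag_biform_zero_nonzero_deg0[of a z d n j b] z b by (simp add: e'_def)
    next
      case False
      then show ?thesis
        using diag_biform_zero_nonzero_by_rescaling[of a z e n j b v d] z b v assms(5)
        by (simp add: e'_def)
    qed
  qed
  then show ?thesis
    unfolding diag_biform_def by (intro exI[of _ N]) auto
qed

end
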